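(* Let $n\ge 2$ and let $\alpha,\beta$ be $n$-cycles in the symmetric group $S_{n+1}$. Then there is an integer $d$ with $1\le d\le n-1$ such that $\alpha\beta^d$ is not an $n$-cycle.
   Context: Permutations act on the right and $\alpha\beta$ means first $\alpha$, then $\beta$. *)

theory Defs
  imports "HOL-Combinatorics.Combinatorics"
begin

text \<open>The symmetric group S_m is modelled as the permutations of {1..m}
  (functions nat => nat permuting {1..m}, identity outside).\<close>

definition is_k_cycle_in :: "nat \<Rightarrow> nat \<Rightarrow> (nat \<Rightarrow> nat) \<Rightarrow> bool" where
  "is_k_cycle_in m k p \<longleftrightarrow>
     (\<exists>cs. distinct cs \<and> length cs = k \<and> set cs \<subseteq> {1..m} \<and> p = cycle_of_list cs)"

text \<open>Product convention: permutations act on the right, so alpha beta means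
  first alpha then beta, i.e. the function beta o alpha.\<close>

definition perm_mult :: "(nat \<Rightarrow> nat) \<Rightarrow> (nat \<Rightarrow> nat) \<Rightarrow> (nat \<Rightarrow> nat)" where
  "perm_mult a b = b \<circ> a"

end

theory Submission imports Defs begin

text \<open>An \<open>n\<close>-cycle in \<open>S\<^sub>n\<^sub>+\<^sub>1\<close> has exactly one fixed point. Let \<open>b\<close> be the fixed
  point of \<open>\<beta>\<close>, and suppose every \<open>\<beta>\<^sup>d \<circ> \<alpha>\<close> with \<open>1 \<le> d \<le> n - 1\<close> is an \<open>n\<close>-cycle.
  If \<open>\<alpha>\<close> also fixes \<open>b\<close>, pick \<open>x \<noteq> b\<close>; then \<open>\<alpha> x\<close> and \<open>x\<close> lie on the cycle of \<open>\<beta>\<close>,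
  so \<open>\<beta>\<^sup>d (\<alpha> x) = x\<close> for some \<open>0 < d < n\<close>, and \<open>\<beta>\<^sup>d \<circ> \<alpha>\<close> fixes both \<open>x\<close> and \<open>b\<close>.
  Otherwise let \<open>a\<close> be the fixed point of \<open>\<alpha>\<close> and \<open>\<alpha> e = b\<close>. The fixed point of
  \<open>\<beta>\<^sup>d \<circ> \<alpha>\<close> avoids \<open>a\<close>, \<open>b\<close> and \<open>e\<close>, and distinct \<open>d\<close> give distinct fixed points, since
  \<open>\<beta>\<^sup>d (\<alpha> x) = x\<close> determines \<open>d\<close> modulo \<open>n\<close>. This puts \<open>n - 1\<close> points into a set of
  size \<open>n - 2\<close>.\<close>

lemma funpow_cycle_of_list_nth:
  assumes "distinct cs" "i < length cs"
  shows "(cycle_of_list cs ^^ d) (cs ! i) = cs ! ((i + d) mod length cs)"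
proof -
  have "map (cycle_of_list cs ^^ d) cs ! i = rotate d cs ! i"
    using cyclic_rotation[OF assms(1)] by simp
  then show ?thesis
    using assms(2) by (simp add: nth_rotate add.commute)
qed

lemma funpow_cycle_of_list_connects:
  assumes "distinct cs" "x \<in> set cs" "y \<in> set cs"
  obtains d where "d < length cs" "(cycle_of_list cs ^^ d) y = x"
proof -
  let ?n = "length cs"
  obtain i where i: "i < ?n" "x = cs ! i"
    using assms(2) by (metis in_set_conv_nth)
  obtain j where j: "j < ?n" "y = cs ! j"
    using assms(3) by (metis in_set_conv_nth)
  define d where "d = (i + ?n - j) mod ?n"
  have "(j + d) mod ?n = (j + (i + ?n - j)) mod ?n"
    unfolding d_def by (simp add: mod_add_right_eq)
  also have "\<dots> = i"
    using i(1) j(1) by simp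
  finally have "(cycle_of_list cs ^^ d) y = x"
    using funpow_cycle_of_list_nth[OF assms(1) j(1)] i j by simp
  moreover have "d < ?n"
    unfolding d_def using i(1) by (intro mod_less_divisor) linarith
  ultimately show thesis
    using that by blast
qed

lemma funpow_cycle_of_list_exponent_unique:
  assumes "distinct cs" "y \<in> set cs" "d\<^sub>1 < length cs" "d\<^sub>2 < length cs"
    and "(cycle_of_list cs ^^ d\<^sub>1) y = (cycle_of_list cs ^^ d\<^sub>2) y"
  shows "d\<^sub>1 = d\<^sub>2"
proof -
  let ?n = "length cs"
  obtain j where j: "j < ?n" "y = cs ! j"
    using assms(2) by (metis in_set_conv_nth)
  have "cs ! ((j + d\<^sub>1) mod ?n) = cs ! ((j + d\<^sub>2) mod ?n)"
    using assms(5) funpow_cycle_of_list_nth[OF assms(1) j(1)] j(2) by simp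
  moreover have "0 < ?n"
    using j(1) by linarith
  ultimately have "(j + d\<^sub>1) mod ?n = (j + d\<^sub>2) mod ?n"
    using nth_eq_iff_index_eq[OF assms(1)] mod_less_divisor by blast
  then have "d\<^sub>1 mod ?n = d\<^sub>2 mod ?n"
    by (simp add: nat_mod_eq_iff)
  then show ?thesis
    using assms(3,4) by simp
qed

lemma cycle_of_list_fixpoint_iff:
  assumes "distinct cs" "2 \<le> length cs"
  shows "cycle_of_list cs x = x \<longleftrightarrow> x \<notin> set cs"
proof
  assume fixed: "cycle_of_list cs x = x"
  show "x \<notin> set cs"
  proof
    assume "x \<in> set cs"
    then obtain i where i: "i < length cs" "x = cs ! i"
      by (metis in_set_conv_nth)
    have "(i + 1) mod length cs \<noteq> i"
      using assms(2) i(1) by (cases "i + 1 = length cs") auto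
    moreover have "cs ! ((i + 1) mod length cs) = cs ! i"
      using funpow_cycle_of_list_nth[OF assms(1) i(1), of 1] fixed i(2) by simp
    moreover have "(i + 1) mod length cs < length cs"
      using i(1) by (intro mod_less_divisor) linarith
    ultimately show False
      using nth_eq_iff_index_eq[OF assms(1)] i(1) by blast
  qed
next
  show "x \<notin> set cs \<Longrightarrow> cycle_of_list cs x = x"
    by (rule id_outside_supp)
qed

lemma is_k_cycle_in_permutes:
  assumes "is_k_cycle_in m k p"
  shows "p permutes {1..m}"
  using assms cycle_permutes permutes_subset unfolding is_k_cycle_in_def by blast

lemma n_cycle_in_Suc_missing_pointE:
  assumes "is_k_cycle_in (n + 1) n p"
  obtains cs c where "distinct cs" "length cs = n" "p = cycle_of_list cs"
    "c \<notin> set cs" "{1..n + 1} = insert c (set cs)"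
proof -
  obtain cs where cs: "distinct cs" "length cs = n" "set cs \<subseteq> {1..n + 1}" "p = cycle_of_list cs"
    using assms unfolding is_k_cycle_in_def by blast
  have "card ({1..n + 1} - set cs) = 1"
    using cs(1-3) by (simp add: card_Diff_subset distinct_card)
  then obtain c where "{1..n + 1} - set cs = {c}"
    by (rule card_1_singletonE)
  then show thesis
    using that[OF cs(1,2,4)] cs(3) by blast
qed

lemma n_cycle_in_Suc_has_fixpoint:
  assumes "is_k_cycle_in (n + 1) n p"
  obtains c where "c \<in> {1..n + 1}" "p c = c"
  using assms
  by (rule n_cycle_in_Suc_missing_pointE) (metis id_outside_supp insertI1)

lemma n_cycle_in_Suc_fixpoint_unique:
  assumes "is_k_cycle_in (n + 1) n p" "2 \<le> n"
    and "x \<in> {1..n + 1}" "y \<in> {1..n + 1}" "p x = x" "p y = y"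
  shows "x = y"
  using assms(1)
proof (rule n_cycle_in_Suc_missing_pointE)
  fix cs c
  assume cs: "distinct cs" "length cs = n" "p = cycle_of_list cs"
    and "{1..n + 1} = insert c (set cs)"
  have "x \<notin> set cs" "y \<notin> set cs"
    using cycle_of_list_fixpoint_iff[OF cs(1)] cs(2,3) assms(2,5,6) by simp_all
  with assms(3,4) \<open>{1..n + 1} = insert c (set cs)\<close> show "x = y"
    by (metis insertE)
qed

lemma product_not_n_cycle_if_fixpoint_shared:
  assumes "2 \<le> n" "is_k_cycle_in (n + 1) n \<alpha>"
    and bs: "distinct bs" "length bs = n" "b \<notin> set bs" "{1..n + 1} = insert b (set bs)"
    and "\<alpha> b = b"
  shows "\<exists>d\<in>{1..n - 1}. \<not> is_k_cycle_in (n + 1) n ((cycle_of_list bs ^^ d) \<circ> \<alpha>)"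
proof -
  let ?\<beta> = "cycle_of_list bs"
  have \<alpha>_permutes: "\<alpha> permutes {1..n + 1}"
    using assms(2) by (rule is_k_cycle_in_permutes)
  define x where "x = bs ! 0"
  have "x \<in> set bs"
    unfolding x_def using assms(1) bs(2) by (intro nth_mem) simp
  then have x: "x \<in> set bs" "x \<noteq> b" "x \<in> {1..n + 1}"
    using bs(3,4) by auto
  have "\<alpha> x \<noteq> x"
    using n_cycle_in_Suc_fixpoint_unique[OF assms(2,1)] x(2,3) bs(4) \<open>\<alpha> b = b\<close> by blast
  have "\<alpha> x \<noteq> b"
    using permutes_inj[OF \<alpha>_permutes] \<open>\<alpha> b = b\<close> x(2) by (metis injD)
  moreover have "\<alpha> x \<in> {1..n + 1}"
    using permutes_in_image[OF \<alpha>_permutes] x(3) by blast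
  ultimately have "\<alpha> x \<in> set bs"
    using bs(4) by blast
  then obtain d where d: "d < n" "(?\<beta> ^^ d) (\<alpha> x) = x"
    using funpow_cycle_of_list_connects[OF bs(1) x(1)] bs(2) by metis
  have "d \<noteq> 0"
    using d(2) \<open>\<alpha> x \<noteq> x\<close> by (metis funpow_0)
  have "(?\<beta> ^^ d) b = b"
    using permutes_not_in[OF permutes_funpow[OF cycle_permutes] bs(3)] .
  then have "((?\<beta> ^^ d) \<circ> \<alpha>) b = b" "((?\<beta> ^^ d) \<circ> \<alpha>) x = x"
    using \<open>\<alpha> b = b\<close> d(2) by simp_all
  moreover have "b \<in> {1..n + 1}"
    using bs(4) by blast
  ultimately have "\<not> is_k_cycle_in (n + 1) n ((?\<beta> ^^ d) \<circ> \<alpha>)"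
    using n_cycle_in_Suc_fixpoint_unique[OF _ assms(1)] x(2,3) by metis
  then show ?thesis
    using d(1) \<open>d \<noteq> 0\<close> by auto
qed

lemma fixpoint_of_cycle_power_comp:
  assumes "distinct bs" "b \<notin> set bs" "{1..m} = insert b (set bs)"
    and "\<alpha> permutes {1..m}" "\<alpha> b \<noteq> b"
    and "0 < d" "d < length bs" "x \<in> {1..m}" "(cycle_of_list bs ^^ d) (\<alpha> x) = x"
  shows "x \<in> set bs" "\<alpha> x \<in> set bs" "\<alpha> x \<noteq> x"
proof -
  let ?\<beta> = "cycle_of_list bs"
  have \<beta>_pow_permutes: "(?\<beta> ^^ d) permutes set bs"
    by (rule permutes_funpow[OF cycle_permutes])
  have "\<alpha> x \<noteq> b"
  proof
    assume "\<alpha> x = b"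
    then have "x = b"
      using assms(9) permutes_not_in[OF \<beta>_pow_permutes assms(2)] by simp
    with \<open>\<alpha> x = b\<close> assms(5) show False
      by simp
  qed
  moreover have "\<alpha> x \<in> {1..m}"
    using permutes_in_image[OF assms(4)] assms(8) by blast
  ultimately show "\<alpha> x \<in> set bs"
    using assms(3) by blast
  then show "x \<in> set bs"
    using permutes_in_image[OF \<beta>_pow_permutes] assms(9) by metis
  show "\<alpha> x \<noteq> x"
  proof
    assume "\<alpha> x = x"
    then have "(?\<beta> ^^ d) (\<alpha> x) = (?\<beta> ^^ 0) (\<alpha> x)"
      using assms(9) by simp
    moreover have "0 < length bs"
      using assms(7) by linarith
    ultimately have "d = 0"
      using funpow_cycle_of_list_exponent_unique[OF assms(1) \<open>\<alpha> x \<in> set bs\<close> assms(7)] by blast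
    with assms(6) show False
      by simp
  qed
qed

lemma card_moved_within_le:
  assumes "{1..m} = insert b S" "b \<notin> S" "\<alpha> permutes {1..m}" "\<alpha> b \<noteq> b"
    and "a \<in> {1..m}" "\<alpha> a = a"
  shows "card {x \<in> S. \<alpha> x \<in> S \<and> \<alpha> x \<noteq> x} \<le> m - 3"
proof -
  have "b \<in> \<alpha> ` {1..m}"
    using permutes_image[OF assms(3)] assms(1) by blast
  then obtain e where e: "e \<in> {1..m}" "\<alpha> e = b"
    by blast
  have "a \<noteq> b" "e \<noteq> a" "e \<noteq> b"
    using assms(4,6) e(2) by auto
  have "{x \<in> S. \<alpha> x \<in> S \<and> \<alpha> x \<noteq> x} \<subseteq> {1..m} - {a, b, e}"
    using assms(1,2,6) e(2) by auto
  then have "card {x \<in> S. \<alpha> x \<in> S \<and> \<alpha> x \<noteq> x} \<le> card ({1..m} - {a, b, e})"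
    by (intro card_mono) simp_all
  also have "\<dots> = m - 3"
  proof -
    have "{a, b, e} \<subseteq> {1..m}"
      using assms(1,5) e(1) by blast
    then show ?thesis
      using \<open>a \<noteq> b\<close> \<open>e \<noteq> a\<close> \<open>e \<noteq> b\<close> by (simp add: card_Diff_subset)
  qed
  finally show ?thesis .
qed

lemma product_not_n_cycle_if_fixpoint_moved:
  assumes "2 \<le> n" "is_k_cycle_in (n + 1) n \<alpha>"
    and bs: "distinct bs" "length bs = n" "b \<notin> set bs" "{1..n + 1} = insert b (set bs)"
    and "\<alpha> b \<noteq> b"
  shows "\<exists>d\<in>{1..n - 1}. \<not> is_k_cycle_in (n + 1) n ((cycle_of_list bs ^^ d) \<circ> \<alpha>)"
proof (rule ccontr)
  let ?\<beta> = "cycle_of_list bs"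
  assume all_cycles: "\<not> ?thesis"
  have "\<exists>x. x \<in> {1..n + 1} \<and> (?\<beta> ^^ d) (\<alpha> x) = x" if "d \<in> {1..n - 1}" for d
  proof -
    have "is_k_cycle_in (n + 1) n ((?\<beta> ^^ d) \<circ> \<alpha>)"
      using all_cycles that by blast
    then obtain x where "x \<in> {1..n + 1}" "((?\<beta> ^^ d) \<circ> \<alpha>) x = x"
      by (rule n_cycle_in_Suc_has_fixpoint)
    then show ?thesis
      by auto
  qed
  then obtain g where g: "\<And>d. d \<in> {1..n - 1} \<Longrightarrow> g d \<in> {1..n + 1} \<and> (?\<beta> ^^ d) (\<alpha> (g d)) = g d"
    by metis
  have \<alpha>_permutes: "\<alpha> permutes {1..n + 1}"
    using assms(2) by (rule is_k_cycle_in_permutes)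
  have fixpoint_g: "g d \<in> set bs" "\<alpha> (g d) \<in> set bs" "\<alpha> (g d) \<noteq> g d" if d: "d \<in> {1..n - 1}" for d
  proof -
    have "0 < d" "d < length bs"
      using d bs(2) assms(1) by auto
    with g[OF d] show "g d \<in> set bs" "\<alpha> (g d) \<in> set bs" "\<alpha> (g d) \<noteq> g d"
      using fixpoint_of_cycle_power_comp[OF bs(1,3,4) \<alpha>_permutes \<open>\<alpha> b \<noteq> b\<close>] by blast+
  qed
  have "g ` {1..n - 1} \<subseteq> {x \<in> set bs. \<alpha> x \<in> set bs \<and> \<alpha> x \<noteq> x}"
    using fixpoint_g by blast
  moreover have "inj_on g {1..n - 1}"
  proof (rule inj_onI)
    fix d\<^sub>1 d\<^sub>2
    assume d: "d\<^sub>1 \<in> {1..n - 1}" "d\<^sub>2 \<in> {1..n - 1}" and "g d\<^sub>1 = g d\<^sub>2"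
    then have "(?\<beta> ^^ d\<^sub>1) (\<alpha> (g d\<^sub>1)) = (?\<beta> ^^ d\<^sub>2) (\<alpha> (g d\<^sub>1))"
      using g[OF d(1)] g[OF d(2)] by simp
    then show "d\<^sub>1 = d\<^sub>2"
      using funpow_cycle_of_list_exponent_unique[OF bs(1) fixpoint_g(2)[OF d(1)]] d bs(2) assms(1)
      by auto
  qed
  ultimately have "card {1..n - 1} \<le> card {x \<in> set bs. \<alpha> x \<in> set bs \<and> \<alpha> x \<noteq> x}"
    by (intro card_inj_on_le) auto
  moreover obtain a where "a \<in> {1..n + 1}" "\<alpha> a = a"
    using assms(2) by (rule n_cycle_in_Suc_has_fixpoint)
  then have "card {x \<in> set bs. \<alpha> x \<in> set bs \<and> \<alpha> x \<noteq> x} \<le> n + 1 - 3"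
    using card_moved_within_le[OF bs(4,3) \<alpha>_permutes \<open>\<alpha> b \<noteq> b\<close>] by blast
  ultimately show False
    using assms(1) by simp
qed

theorem lemma1:
  fixes n :: nat and \<alpha> \<beta> :: "nat \<Rightarrow> nat"
  assumes "n \<ge> 2"
    and "is_k_cycle_in (n + 1) n \<alpha>"
    and "is_k_cycle_in (n + 1) n \<beta>"
  shows "\<exists>d::nat. 1 \<le> d \<and> d \<le> n - 1 \<and>
           \<not> is_k_cycle_in (n + 1) n (perm_mult \<alpha> (\<beta> ^^ d))"
proof -
  obtain bs b where bs: "distinct bs" "length bs = n" "\<beta> = cycle_of_list bs"
    "b \<notin> set bs" "{1..n + 1} = insert b (set bs)"
    using assms(3) by (rule n_cycle_in_Suc_missing_pointE)
  have "\<exists>d\<in>{1..n - 1}. \<not> is_k_cycle_in (n + 1) n ((\<beta> ^^ d) \<circ> \<alpha>)"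
  proof (cases "\<alpha> b = b")
    case True
    show ?thesis
      unfolding bs(3) by (rule product_not_n_cycle_if_fixpoint_shared[OF assms(1,2) bs(1,2,4,5) True])
  next
    case False
    show ?thesis
      unfolding bs(3) by (rule product_not_n_cycle_if_fixpoint_moved[OF assms(1,2) bs(1,2,4,5) False])
  qed
  then show ?thesis
    unfolding perm_mult_def by auto
qed

end
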